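(* Let $\{G_i\}$ be a family of graphs with common induced subgraph $J$, embedded as $J_i\subseteq G_i$, such that $\{(G_i|J_i)\}$ is isometric, and let $H=\amalg\{(G_i|J_i)\}$. If every $G_i$ is connected and bipartite, then $\dim_l(H)=1$.
   Context: $d_G$ is shortest-path distance. A vertex $w$ distinguishes an edge $uv$ if $d(w,u)\neq d(w,v)$; $\dim_l(G)$ is the minimum size of a set $B\subseteq V(G)$ such that every edge of $G$ is distinguished by a vertex of $B$. $J$ is a common induced subgraph of each $G_i$ via injective maps $\iota_i:V(J)\to V(G_i)$ with $\iota_i(x)\iota_i(y)\in E(G_i)$ iff $xy\in E(J)$; $J_i$ is the induced image and $x^i=\iota_i(x)$. $H=\amalg\{(G_i|J_i)\}$ is obtained from the disjoint union of the $G_i$ by identifying, for each $x\in V(J)$, all $x^i$ into one vertex. The family is isometric if $d_{G_i}(a^i,b^i)=d_{G_j}(a^j,b^j)$ for all $i,j$ and $a,b\in V(J)$. *)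

theory Defs
  imports "HOL-Library.Extended_Nat"
begin

definition graph :: "'a set \<Rightarrow> ('a \<Rightarrow> 'a \<Rightarrow> bool) \<Rightarrow> bool" where
  "graph V E \<longleftrightarrow> finite V \<and> (\<forall>u v. E u v \<longrightarrow> u \<in> V \<and> v \<in> V \<and> u \<noteq> v \<and> E v u)"

fun kwalk :: "('a \<Rightarrow> 'a \<Rightarrow> bool) \<Rightarrow> nat \<Rightarrow> 'a \<Rightarrow> 'a \<Rightarrow> bool" where
  "kwalk E 0 u v = (u = v)"
| "kwalk E (Suc n) u v = (\<exists>w. E u w \<and> kwalk E n w v)"

definition gdist :: "('a \<Rightarrow> 'a \<Rightarrow> bool) \<Rightarrow> 'a \<Rightarrow> 'a \<Rightarrow> enat" where
  "gdist E u v = (if \<exists>n. kwalk E n u v then enat (LEAST n. kwalk E n u v) else \<infinity>)"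

definition connected_graph :: "'a set \<Rightarrow> ('a \<Rightarrow> 'a \<Rightarrow> bool) \<Rightarrow> bool" where
  "connected_graph V E \<longleftrightarrow> (\<forall>u\<in>V. \<forall>v\<in>V. \<exists>n. kwalk E n u v)"

definition bipartite :: "'a set \<Rightarrow> ('a \<Rightarrow> 'a \<Rightarrow> bool) \<Rightarrow> bool" where
  "bipartite V E \<longleftrightarrow> (\<exists>A \<subseteq> V. \<forall>u v. E u v \<longrightarrow> (u \<in> A \<longleftrightarrow> v \<notin> A))"

definition edge_resolving :: "'a set \<Rightarrow> ('a \<Rightarrow> 'a \<Rightarrow> bool) \<Rightarrow> 'a set \<Rightarrow> bool" where
  "edge_resolving V E B \<longleftrightarrow> B \<subseteq> V \<and>
     (\<forall>u v. E u v \<longrightarrow> (\<exists>w\<in>B. gdist E w u \<noteq> gdist E w v))"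

definition edge_metric_dim :: "'a set \<Rightarrow> ('a \<Rightarrow> 'a \<Rightarrow> bool) \<Rightarrow> nat" where
  "edge_metric_dim V E = (LEAST k. \<exists>B. finite B \<and> card B = k \<and> edge_resolving V E B)"

text \<open>Amalgamation: vertices of J (Inl) and vertices of G_i outside J_i (Inr (i,v)).\<close>
definition amal_proj :: "'j set \<Rightarrow> ('i \<Rightarrow> 'j \<Rightarrow> 'v) \<Rightarrow> 'i \<Rightarrow> 'v \<Rightarrow> 'j + ('i \<times> 'v)" where
  "amal_proj VJ \<iota> i v = (if v \<in> \<iota> i ` VJ then Inl (the_inv_into VJ (\<iota> i) v) else Inr (i, v))"

definition amal_V :: "'i set \<Rightarrow> ('i \<Rightarrow> 'v set) \<Rightarrow> 'j set \<Rightarrow> ('i \<Rightarrow> 'j \<Rightarrow> 'v)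
    \<Rightarrow> ('j + ('i \<times> 'v)) set" where
  "amal_V I V VJ \<iota> = (\<Union>i\<in>I. amal_proj VJ \<iota> i ` V i)"

definition amal_E :: "'i set \<Rightarrow> ('i \<Rightarrow> 'v set) \<Rightarrow> ('i \<Rightarrow> 'v \<Rightarrow> 'v \<Rightarrow> bool) \<Rightarrow> 'j set
    \<Rightarrow> ('i \<Rightarrow> 'j \<Rightarrow> 'v) \<Rightarrow> 'j + ('i \<times> 'v) \<Rightarrow> 'j + ('i \<times> 'v) \<Rightarrow> bool" where
  "amal_E I V E VJ \<iota> a b = (\<exists>i\<in>I. \<exists>u\<in>V i. \<exists>v\<in>V i. E i u v \<and>
      a = amal_proj VJ \<iota> i u \<and> b = amal_proj VJ \<iota> i v)"

end

theory Submission
  imports Defs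
begin

text \<open>Colour every vertex of \<open>H\<close> by the parity of its distance to a fixed vertex \<open>x\<^sub>0\<close> of \<open>J\<close>.
  In each bipartite connected \<open>G\<^sub>i\<close> this is a proper 2-colouring, and by isometry the colourings
  agree on \<open>J\<close>, so they glue to a proper 2-colouring of \<open>H\<close>. In a graph with a proper 2-colouring,
  the two ends of an edge have different colours, hence distances of different parity to any vertex
  they are reachable from; so the single vertex \<open>x\<^sub>0\<close> distinguishes every edge of \<open>H\<close>.\<close>

lemma kwalk_parity:
  assumes proper: "\<And>a b. E a b \<Longrightarrow> c a \<noteq> c b"
  shows "kwalk E n a b \<Longrightarrow> (c a = (c b :: bool)) \<longleftrightarrow> even n"
proof (induction n arbitrary: a)
  case 0 then show ?case by simp
next
  case (Suc n)
  then obtain w where "E a w" "kwalk E n w b" by auto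
  with Suc.IH[of w] proper[of a w] show ?case by auto
qed

lemma kwalk_map:
  assumes hom: "\<And>u v. E u v \<Longrightarrow> F (f u) (f v)"
  shows "kwalk E n u v \<Longrightarrow> kwalk F n (f u) (f v)"
proof (induction n arbitrary: u)
  case 0 then show ?case by simp
next
  case (Suc n)
  then obtain w where "E u w" "kwalk E n w v" by auto
  with Suc.IH[of w] hom[of u w] show ?case by auto
qed

lemma gdist_finite_if_kwalk:
  assumes "kwalk E n u v"
  obtains m where "gdist E u v = enat m"
  using assms by (intro that[of "LEAST n. kwalk E n u v"]) (auto simp: gdist_def)

lemma kwalk_if_gdist_eq_enat:
  assumes "gdist E u v = enat m"
  shows "kwalk E m u v"
  using assms unfolding gdist_def by (auto split: if_splits intro: LeastI)

lemma bipartite_distance_parity_proper: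
  assumes "bipartite V E" "connected_graph V E" "graph V E"
    and "r \<in> V" "E u v"
  shows "even (the_enat (gdist E r u)) \<noteq> even (the_enat (gdist E r v))"
proof -
  obtain A where "\<forall>a b. E a b \<longrightarrow> (a \<in> A \<longleftrightarrow> b \<notin> A)"
    using assms(1) unfolding bipartite_def by blast
  then have A: "\<And>a b. E a b \<Longrightarrow> (a \<in> A) \<noteq> (b \<in> A)" by simp
  have parity: "(r \<in> A \<longleftrightarrow> x \<in> A) \<longleftrightarrow> even (the_enat (gdist E r x))" if "x \<in> V" for x
  proof -
    obtain n where "kwalk E n r x"
      using assms(2,4) \<open>x \<in> V\<close> unfolding connected_graph_def by blast
    then obtain m where m: "gdist E r x = enat m" by (rule gdist_finite_if_kwalk)
    show ?thesis
      using kwalk_parity[of E "\<lambda>a. a \<in> A", OF A kwalk_if_gdist_eq_enat[OF m]] m by simp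
  qed
  have "u \<in> V" "v \<in> V" using assms(3,5) unfolding graph_def by blast+
  from parity[OF this(1)] parity[OF this(2)] A[OF assms(5)] show ?thesis by argo
qed

lemma edge_resolving_singleton_if_proper_2_colouring:
  assumes "w \<in> V"
    and proper: "\<And>a b. E a b \<Longrightarrow> c a \<noteq> (c b :: bool)"
    and reach: "\<And>a b. E a b \<Longrightarrow> \<exists>n. kwalk E n w a"
  shows "edge_resolving V E {w}"
  unfolding edge_resolving_def
proof (intro conjI allI impI)
  show "{w} \<subseteq> V" using \<open>w \<in> V\<close> by simp
  fix a b assume ab: "E a b"
  obtain n where "kwalk E n w a" using reach[OF ab] by blast
  then obtain m where m: "gdist E w a = enat m" by (rule gdist_finite_if_kwalk)
  show "\<exists>w'\<in>{w}. gdist E w' a \<noteq> gdist E w' b"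
  proof (rule ccontr)
    assume "\<not> ?thesis"
    then have "gdist E w b = enat m" using m by simp
    then have "(c w = c b) \<longleftrightarrow> even m"
      by (intro kwalk_parity[OF proper] kwalk_if_gdist_eq_enat)
    moreover have "(c w = c a) \<longleftrightarrow> even m"
      using m by (intro kwalk_parity[OF proper] kwalk_if_gdist_eq_enat)
    ultimately show False using proper[OF ab] by auto
  qed
qed

lemma edge_metric_dim_eq_1:
  assumes "edge_resolving V E {w}" "E a b"
  shows "edge_metric_dim V E = 1"
  unfolding edge_metric_dim_def
proof (rule Least_equality)
  show "\<exists>B. finite B \<and> card B = 1 \<and> edge_resolving V E B"
    using assms(1) by force
next
  fix k assume "\<exists>B. finite B \<and> card B = k \<and> edge_resolving V E B"
  then obtain B where "finite B" "card B = k" "edge_resolving V E B" by blast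
  moreover have "\<not> edge_resolving V E {}"
    using assms(2) unfolding edge_resolving_def by blast
  ultimately show "1 \<le> k" by (cases "k = 0") auto
qed

lemma amal_proj_embedding:
  assumes "inj_on (\<iota> i) VJ" "x \<in> VJ"
  shows "amal_proj VJ \<iota> i (\<iota> i x) = Inl x"
  using assms unfolding amal_proj_def by (simp add: the_inv_into_f_f)

lemma amal_E_proj:
  assumes "i \<in> I" "u \<in> V i" "v \<in> V i" "E i u v"
  shows "amal_E I V E VJ \<iota> (amal_proj VJ \<iota> i u) (amal_proj VJ \<iota> i v)"
  using assms unfolding amal_E_def by blast

lemma amal_E_proper_colouring:
  assumes inj: "\<forall>i\<in>I. inj_on (\<iota> i) VJ"
    and proper: "\<forall>i\<in>I. \<forall>u v. E i u v \<longrightarrow> col i u \<noteq> (col i v :: bool)"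
    and agree: "\<forall>i\<in>I. \<forall>j\<in>I. \<forall>x\<in>VJ. col i (\<iota> i x) = col j (\<iota> j x)"
  obtains c :: "_ \<Rightarrow> bool" where "\<And>a b. amal_E I V E VJ \<iota> a b \<Longrightarrow> c a \<noteq> c b"
proof -
  define i0 where "i0 = (SOME i. i \<in> I)"
  define c where
    "c a = (case a of Inl x \<Rightarrow> col i0 (\<iota> i0 x) | Inr (i, v) \<Rightarrow> col i v)" for a
  have c_proj: "c (amal_proj VJ \<iota> i u) = col i u" if "i \<in> I" for i u
  proof (cases "u \<in> \<iota> i ` VJ")
    case True
    then obtain x where x: "x \<in> VJ" "u = \<iota> i x" by auto
    have "i0 \<in> I" unfolding i0_def using \<open>i \<in> I\<close> by (rule someI)
    have "c (amal_proj VJ \<iota> i u) = col i0 (\<iota> i0 x)"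
      using amal_proj_embedding[of \<iota> i VJ x] inj x \<open>i \<in> I\<close> by (simp add: c_def)
    also have "\<dots> = col i u"
      unfolding x(2) using agree \<open>i0 \<in> I\<close> \<open>i \<in> I\<close> x(1) by blast
    finally show ?thesis .
  next
    case False then show ?thesis unfolding amal_proj_def c_def by simp
  qed
  have "c a \<noteq> c b" if ab: "amal_E I V E VJ \<iota> a b" for a b
  proof -
    obtain i u v where "i \<in> I" "E i u v"
      "a = amal_proj VJ \<iota> i u" "b = amal_proj VJ \<iota> i v"
      using ab unfolding amal_E_def by blast
    then show ?thesis using c_proj proper by simp
  qed
  then show thesis by (rule that)
qed

lemma amal_E_reachable_from_J:
  assumes inj: "\<forall>i\<in>I. inj_on (\<iota> i) VJ"
    and conn: "\<forall>i\<in>I. connected_graph (V i) (E i)"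
    and sub: "\<forall>i\<in>I. \<iota> i ` VJ \<subseteq> V i"
    and graphs: "\<forall>i\<in>I. graph (V i) (E i)"
    and "x0 \<in> VJ" "amal_E I V E VJ \<iota> a b"
  shows "\<exists>n. kwalk (amal_E I V E VJ \<iota>) n (Inl x0) a"
proof -
  obtain i u where i: "i \<in> I" and u: "u \<in> V i" and a: "a = amal_proj VJ \<iota> i u"
    using assms(6) unfolding amal_E_def by blast
  obtain n where "kwalk (E i) n (\<iota> i x0) u"
    using conn sub i u \<open>x0 \<in> VJ\<close> unfolding connected_graph_def by blast
  moreover have "amal_E I V E VJ \<iota> (amal_proj VJ \<iota> i u') (amal_proj VJ \<iota> i v')"
    if "E i u' v'" for u' v'
    using that graphs i unfolding graph_def by (intro amal_E_proj[OF i]) blast+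
  ultimately have "kwalk (amal_E I V E VJ \<iota>) n (amal_proj VJ \<iota> i (\<iota> i x0)) a"
    unfolding a by (rule kwalk_map[rotated])
  then show ?thesis
    using amal_proj_embedding[of \<iota> i VJ x0] inj i \<open>x0 \<in> VJ\<close> by auto
qed

theorem corollary1:
  fixes I :: "'i set"
    and V :: "'i \<Rightarrow> 'v set" and E :: "'i \<Rightarrow> 'v \<Rightarrow> 'v \<Rightarrow> bool"
    and VJ :: "'j set" and EJ :: "'j \<Rightarrow> 'j \<Rightarrow> bool"
    and \<iota> :: "'i \<Rightarrow> 'j \<Rightarrow> 'v"
  assumes fin: "finite I"
    and graphs: "\<forall>i\<in>I. graph (V i) (E i)"
    and J_graph: "graph VJ EJ"
    and J_nonempty: "VJ \<noteq> {}"
    and emb_inj: "\<forall>i\<in>I. inj_on (\<iota> i) VJ"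
    and emb_sub: "\<forall>i\<in>I. \<iota> i ` VJ \<subseteq> V i"
    and emb_induced: "\<forall>i\<in>I. \<forall>x\<in>VJ. \<forall>y\<in>VJ. E i (\<iota> i x) (\<iota> i y) \<longleftrightarrow> EJ x y"
    and isometric: "\<forall>i\<in>I. \<forall>j\<in>I. \<forall>a\<in>VJ. \<forall>b\<in>VJ.
                      gdist (E i) (\<iota> i a) (\<iota> i b) = gdist (E j) (\<iota> j a) (\<iota> j b)"
    and conn: "\<forall>i\<in>I. connected_graph (V i) (E i)"
    and bip: "\<forall>i\<in>I. bipartite (V i) (E i)"
    and nontrivial: "\<exists>i\<in>I. \<exists>u v. E i u v"
  shows "edge_metric_dim (amal_V I V VJ \<iota>) (amal_E I V E VJ \<iota>) = 1"
proof -
  obtain x0 where x0: "x0 \<in> VJ" using J_nonempty by auto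
  obtain i0 u0 v0 where i0: "i0 \<in> I" and e0: "E i0 u0 v0" using nontrivial by blast
  have root: "\<iota> i x0 \<in> V i" if "i \<in> I" for i using emb_sub x0 that by blast
  define col where "col i v = even (the_enat (gdist (E i) (\<iota> i x0) v))" for i v
  have col_proper: "col i u \<noteq> col i v" if "i \<in> I" "E i u v" for i u v
    unfolding col_def using bip conn graphs root that
    by (intro bipartite_distance_parity_proper) auto
  have col_agree: "col i (\<iota> i x) = col j (\<iota> j x)" if "i \<in> I" "j \<in> I" "x \<in> VJ" for i j x
  proof -
    have "gdist (E i) (\<iota> i x0) (\<iota> i x) = gdist (E j) (\<iota> j x0) (\<iota> j x)"
      using isometric that x0 by blast
    then show ?thesis unfolding col_def by simp
  qed
  obtain c :: "_ \<Rightarrow> bool" where proper: "\<And>a b. amal_E I V E VJ \<iota> a b \<Longrightarrow> c a \<noteq> c b"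
  proof (rule amal_E_proper_colouring[OF emb_inj, where V = V])
    show "\<forall>i\<in>I. \<forall>u v. E i u v \<longrightarrow> col i u \<noteq> col i v" using col_proper by blast
    show "\<forall>i\<in>I. \<forall>j\<in>I. \<forall>x\<in>VJ. col i (\<iota> i x) = col j (\<iota> j x)" using col_agree by blast
  qed (rule that)
  have "Inl x0 = amal_proj VJ \<iota> i0 (\<iota> i0 x0)"
    using amal_proj_embedding emb_inj i0 x0 by metis
  then have "Inl x0 \<in> amal_V I V VJ \<iota>"
    unfolding amal_V_def using i0 root by blast
  then have "edge_resolving (amal_V I V VJ \<iota>) (amal_E I V E VJ \<iota>) {Inl x0}"
    using proper amal_E_reachable_from_J[OF emb_inj conn emb_sub graphs x0]
    by (rule edge_resolving_singleton_if_proper_2_colouring)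
  moreover have "amal_E I V E VJ \<iota> (amal_proj VJ \<iota> i0 u0) (amal_proj VJ \<iota> i0 v0)"
    using graphs i0 e0 unfolding graph_def by (intro amal_E_proj[OF i0]) blast+
  ultimately show ?thesis by (rule edge_metric_dim_eq_1)
qed

end
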